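(* The sequence $(\mathrm{m}(d)^d)_{d\ge 1}$ has an accumulation point in the interval $[1,2]$.
   Context: For an algebraic integer $\alpha$ with conjugates $\alpha_1,\dots,\alpha_d$, $\operatorname{house}(\alpha)=\max_i|\alpha_i|$. $\mathrm{m}(d)$ denotes the minimum of $\operatorname{house}(\alpha)$ over all algebraic integers $\alpha$ of degree $d$ that are not roots of unity. *)

theory Defs
  imports "HOL-Computational_Algebra.Computational_Algebra" Complex_Main
begin

definition min_poly :: "complex \<Rightarrow> rat poly" where
  "min_poly \<alpha> = (THE p. lead_coeff p = 1 \<and> irreducible p \<and> poly (map_poly of_rat p) \<alpha> = 0)"

definition algebraic_integer :: "complex \<Rightarrow> bool" where
  "algebraic_integer \<alpha> \<longleftrightarrow> (\<exists>p :: int poly. lead_coeff p = 1 \<and> poly (map_poly of_int p) \<alpha> = 0)"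

definition alg_degree :: "complex \<Rightarrow> nat" where
  "alg_degree \<alpha> = degree (min_poly \<alpha>)"

definition conjugates :: "complex \<Rightarrow> complex set" where
  "conjugates \<alpha> = {z. poly (map_poly of_rat (min_poly \<alpha>)) z = 0}"

definition house :: "complex \<Rightarrow> real" where
  "house \<alpha> = Max (norm ` conjugates \<alpha>)"

definition root_of_unity :: "complex \<Rightarrow> bool" where
  "root_of_unity \<alpha> \<longleftrightarrow> (\<exists>n::nat. n > 0 \<and> \<alpha> ^ n = 1)"

definition mhouse :: "nat \<Rightarrow> real" where
  "mhouse d = Inf {house \<alpha> | \<alpha>. algebraic_integer \<alpha> \<and> alg_degree \<alpha> = d \<and> \<not> root_of_unity \<alpha>}"

end

theory Submission
  imports Defs "Berlekamp_Zassenhaus.Factor_Bound"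
begin

text \<open>For \<open>d \<ge> 2\<close> we show \<open>1 \<le> m(d)^d \<le> 2\<close>; Bolzano-Weierstrass then yields the accumulation
  point. Lower bound: the minimal polynomial of an algebraic integer has integer coefficients
  (Gauss's lemma), and for degree \<open>\<ge> 2\<close> its constant term is a nonzero integer whose absolute
  value is the product of the absolute values of the conjugates, so some conjugate has absolute
  value \<open>\<ge> 1\<close>. Upper bound: \<open>2^(1/d)\<close> has house \<open>2^(1/d)\<close>, since its minimal polynomial is
  \<open>X^d - 2\<close>; a monic proper factor of degree \<open>k\<close> would have integer constant term \<open>c\<close> with
  \<open>|c|^d = 2^k\<close>, impossible for \<open>0 < k < d\<close>.\<close>

interpretation of_rat_poly_hom: map_poly_idom_hom of_rat ..

lemma unit_rat_poly_no_root:
  fixes \<alpha> :: "'a :: field_char_0"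
  assumes "is_unit (p :: rat poly)"
  shows "poly (map_poly of_rat p) \<alpha> \<noteq> 0"
proof -
  from assms obtain c where "p = [:c:]" "c \<noteq> 0"
    by (metis is_unit_iff_degree degree_eq_zeroE not_is_unit_0 pCons_eq_0_iff)
  then show ?thesis by simp
qed

lemma irreducible_dvd_of_common_root:
  fixes \<alpha> :: "'a :: field_char_0"
  assumes irr: "irreducible (p :: rat poly)"
    and p: "poly (map_poly of_rat p) \<alpha> = 0" and r: "poly (map_poly of_rat r) \<alpha> = 0"
  shows "p dvd r"
proof -
  obtain x y where "bezout_coefficients p r = (x, y)" by fastforce
  then have "gcd p r = x * p + y * r" by (simp add: bezout_coefficients)
  then have "poly (map_poly of_rat (gcd p r)) \<alpha> = 0"
    using p r by (simp add: hom_distribs)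
  then have "\<not> is_unit (gcd p r)" using unit_rat_poly_no_root by blast
  moreover obtain k where pk: "p = gcd p r * k" by (meson gcd_dvd1 dvdE)
  ultimately have "is_unit k" using irreducibleD[OF irr pk] by blast
  then have "p dvd gcd p r" using pk by (metis dvd_refl mult_unit_dvd_iff)
  then show ?thesis by (meson dvd_trans gcd_dvd2)
qed

lemma monic_irreducible_root_exists:
  fixes \<alpha> :: "'a :: field_char_0"
  assumes "r \<noteq> 0" and "poly (map_poly of_rat r) \<alpha> = 0"
  shows "\<exists>p. lead_coeff p = 1 \<and> irreducible p \<and> poly (map_poly of_rat p) \<alpha> = 0"
  using assms
proof (induction "degree r" arbitrary: r rule: less_induct)
  case less
  show ?case
  proof (cases "irreducible r")
    case True
    let ?p = "Polynomial.smult (inverse (lead_coeff r)) r"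
    have "lead_coeff ?p = 1" "irreducible ?p" "poly (map_poly of_rat ?p) \<alpha> = 0"
      using True less.prems by (simp_all add: hom_distribs)
    then show ?thesis by blast
  next
    case False
    have "\<not> is_unit r" using less.prems unit_rat_poly_no_root by blast
    with False less.prems(1) obtain a b where r: "r = a * b" "\<not> is_unit a" "\<not> is_unit b"
      unfolding irreducible_def by blast
    then have "a \<noteq> 0" "b \<noteq> 0" "degree a > 0" "degree b > 0"
      using less.prems(1) by (auto simp: is_unit_iff_degree)
    moreover have "degree r = degree a + degree b"
      using r \<open>a \<noteq> 0\<close> \<open>b \<noteq> 0\<close> by (simp add: degree_mult_eq)
    moreover have "poly (map_poly of_rat a) \<alpha> = 0 \<or> poly (map_poly of_rat b) \<alpha> = 0"
      using less.prems(2) r(1) by (simp add: hom_distribs)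
    ultimately show ?thesis using less.hyps[of a] less.hyps[of b] by auto
  qed
qed

lemma min_poly_eqI:
  assumes "lead_coeff p = 1" "irreducible p" "poly (map_poly of_rat p) \<alpha> = 0"
  shows "min_poly \<alpha> = p"
  unfolding min_poly_def
  by (rule the_equality)
    (use assms in \<open>auto intro: poly_dvd_antisym irreducible_dvd_of_common_root\<close>)

lemma min_poly_of_root:
  assumes "r \<noteq> 0" "poly (map_poly of_rat r) \<alpha> = 0"
  shows "lead_coeff (min_poly \<alpha>) = 1" "irreducible (min_poly \<alpha>)"
    "poly (map_poly of_rat (min_poly \<alpha>)) \<alpha> = 0"
  using monic_irreducible_root_exists[OF assms] min_poly_eqI by metis+

lemma monic_factor_of_monic_int_poly_is_integral:
  fixes p :: "int poly" and g h :: "rat poly"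
  assumes p: "lead_coeff p = 1" and pgh: "map_poly rat_of_int p = g * h"
    and g: "lead_coeff g = 1"
  shows "\<exists>g'. g = map_poly rat_of_int g'"
proof -
  have "content p = 1"
    using p content_dvd_coeff[of p "degree p"] by (simp add: content_ge_0_int zdvd1_eq)
  moreover obtain c g' where g': "rat_to_normalized_int_poly g = (c, g')" by force
  moreover obtain c' h' where "rat_to_normalized_int_poly h = (c', h')" by force
  ultimately have "p = g' * h'"
    using rat_to_int_factor_content_1 pgh p by fastforce
  then have "lead_coeff g' * lead_coeff h' = 1" using p by (simp add: lead_coeff_mult)
  then have "\<bar>lead_coeff g'\<bar> = 1" using zmult_eq_1_iff by fastforce
  moreover have g_eq: "g = Polynomial.smult c (map_poly of_int g')"
    using rat_to_normalized_int_poly(1)[OF g'] .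
  ultimately have "c = of_int (lead_coeff g')" using g by (auto simp: abs_if split: if_splits)
  then have "g = map_poly rat_of_int (Polynomial.smult (lead_coeff g') g')"
    using g_eq by (simp add: hom_distribs)
  then show ?thesis by blast
qed

lemma monic_poly_0_eq_prod_roots:
  fixes f :: "complex poly"
  assumes "lead_coeff f = 1"
  obtains as where "length as = degree f" "\<forall>a\<in>set as. poly f a = 0"
    "poly f 0 = (\<Prod>a\<leftarrow>as. - a)"
proof -
  obtain as where "Polynomial.smult (lead_coeff f) (\<Prod>a\<leftarrow>as. [:- a, 1:]) = f"
    and len: "length as = degree f"
    using fundamental_theorem_algebra_factorized by blast
  then have f: "f = (\<Prod>a\<leftarrow>as. [:- a, 1:])" using assms by simp
  have poly_f: "poly f x = (\<Prod>a\<leftarrow>as. x - a)" for x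
    unfolding f by (induction as) (auto simp: algebra_simps)
  show ?thesis
    by (rule that[OF len]) (auto simp: poly_f prod_list_zero_iff)
qed

lemma norm_prod_list_uminus: "norm (\<Prod>a\<leftarrow>as. - (a :: complex)) = (\<Prod>a\<leftarrow>as. norm a)"
  by (induction as) (auto simp: norm_mult)

lemma norm_poly_0_le_power_of_root_bound:
  fixes f :: "complex poly"
  assumes "lead_coeff f = 1" and bound: "\<And>z. poly f z = 0 \<Longrightarrow> norm z \<le> M"
  shows "norm (poly f 0) \<le> M ^ degree f"
proof -
  obtain as where as: "length as = degree f" "\<forall>a\<in>set as. poly f a = 0"
    "poly f 0 = (\<Prod>a\<leftarrow>as. - a)"
    using monic_poly_0_eq_prod_roots[OF assms(1)] .
  have "\<forall>a\<in>set as. norm a \<le> M" using as(2) bound by blast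
  then have "(\<Prod>a\<leftarrow>as. norm a) \<le> M ^ length as"
  proof (induction as)
    case (Cons a as)
    then have "0 \<le> M" by (meson norm_ge_zero order_trans list.set_intros(1))
    with Cons show ?case by (simp, intro mult_mono prod_list_nonneg) auto
  qed simp
  then show ?thesis using as by (simp add: norm_prod_list_uminus)
qed

lemma norm_poly_0_power_of_roots:
  fixes f :: "complex poly"
  assumes "lead_coeff f = 1" and roots: "\<And>z. poly f z = 0 \<Longrightarrow> norm z ^ d = c"
  shows "norm (poly f 0) ^ d = c ^ degree f"
proof -
  obtain as where as: "length as = degree f" "\<forall>a\<in>set as. poly f a = 0"
    "poly f 0 = (\<Prod>a\<leftarrow>as. - a)"
    using monic_poly_0_eq_prod_roots[OF assms(1)] .
  have "\<forall>a\<in>set as. norm a ^ d = c" using as(2) roots by blast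
  then have "(\<Prod>a\<leftarrow>as. norm a) ^ d = c ^ length as"
    by (induction as) (auto simp: power_mult_distrib)
  then show ?thesis using as by (simp add: norm_prod_list_uminus)
qed

lemma min_poly_of_algebraic_integer:
  assumes "algebraic_integer \<alpha>"
  shows "lead_coeff (min_poly \<alpha>) = 1" "irreducible (min_poly \<alpha>)"
    "poly (map_poly of_rat (min_poly \<alpha>)) \<alpha> = 0"
    "\<exists>p. min_poly \<alpha> = map_poly rat_of_int p"
proof -
  obtain q :: "int poly" where q: "lead_coeff q = 1" "poly (map_poly of_int q) \<alpha> = 0"
    using assms unfolding algebraic_integer_def by blast
  let ?r = "map_poly rat_of_int q"
  have "?r \<noteq> 0" using q(1) by auto
  moreover have r: "poly (map_poly of_rat ?r) \<alpha> = 0"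
    using q(2) by (simp add: map_poly_map_poly o_def)
  ultimately show mp: "lead_coeff (min_poly \<alpha>) = 1" "irreducible (min_poly \<alpha>)"
    "poly (map_poly of_rat (min_poly \<alpha>)) \<alpha> = 0"
    by (rule min_poly_of_root)+
  have "min_poly \<alpha> dvd ?r" using irreducible_dvd_of_common_root[OF mp(2,3) r] .
  then obtain h where "?r = min_poly \<alpha> * h" ..
  then show "\<exists>p. min_poly \<alpha> = map_poly rat_of_int p"
    using monic_factor_of_monic_int_poly_is_integral q(1) mp(1) by blast
qed

lemma norm_conjugate_le_house:
  assumes "algebraic_integer \<alpha>" and "z \<in> conjugates \<alpha>"
  shows "norm z \<le> house \<alpha>"
proof -
  have "map_poly (of_rat :: rat \<Rightarrow> complex) (min_poly \<alpha>) \<noteq> 0"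
    using min_poly_of_algebraic_integer(1)[OF assms(1)] by auto
  then have "finite (conjugates \<alpha>)" unfolding conjugates_def by (rule poly_roots_finite)
  then show ?thesis unfolding house_def using assms(2) by simp
qed

lemma coeff_0_nonzero_if_irreducible:
  fixes p :: "'a :: field poly"
  assumes irr: "irreducible p" and deg: "degree p \<ge> 2"
  shows "poly.coeff p 0 \<noteq> 0"
proof
  assume "poly.coeff p 0 = 0"
  then have "[:0, 1:] dvd p" by (metis dvd_iff_poly_eq_0 minus_zero poly_0_coeff_0)
  then obtain k where pk: "p = [:0, 1:] * k" ..
  have "\<not> is_unit [:0, 1 :: 'a:]" by (simp add: is_unit_iff_degree)
  then have "degree k = 0" using irreducibleD[OF irr pk] by (simp add: is_unit_iff_degree)
  then have "degree p \<le> 1" unfolding pk using degree_mult_le[of "[:0, 1 :: 'a:]" k] by simp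
  with deg show False by simp
qed

lemma house_ge_1:
  assumes ai: "algebraic_integer \<alpha>" and deg: "alg_degree \<alpha> \<ge> 2"
  shows "house \<alpha> \<ge> 1"
proof -
  obtain p where p: "min_poly \<alpha> = map_poly rat_of_int p"
    using min_poly_of_algebraic_integer(4)[OF ai] by blast
  let ?f = "map_poly (of_rat :: rat \<Rightarrow> complex) (min_poly \<alpha>)"
  have monic: "lead_coeff ?f = 1" using min_poly_of_algebraic_integer(1)[OF ai] by simp
  have deg_f: "degree ?f = alg_degree \<alpha>" unfolding alg_degree_def by simp
  have "poly.coeff p 0 \<noteq> 0"
    using coeff_0_nonzero_if_irreducible[OF min_poly_of_algebraic_integer(2)[OF ai]] deg p
    unfolding alg_degree_def by simp
  then have "1 \<le> norm (poly ?f 0)"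
    by (simp add: poly_0_coeff_0 p del: of_int_abs)
  also have "\<dots> \<le> house \<alpha> ^ alg_degree \<alpha>"
    using norm_poly_0_le_power_of_root_bound[OF monic] norm_conjugate_le_house[OF ai] deg_f
    unfolding conjugates_def by simp
  finally have "1 \<le> house \<alpha> ^ alg_degree \<alpha>" .
  moreover have "0 \<le> house \<alpha>"
    using norm_conjugate_le_house[OF ai, of \<alpha>] min_poly_of_algebraic_integer(3)[OF ai]
    unfolding conjugates_def by (meson mem_Collect_eq norm_ge_zero order_trans)
  ultimately show ?thesis using deg by (meson not_le power_less_one_iff zero_less_numeral order.strict_trans2)
qed

lemma root_of_unity_norm_eq_1:
  assumes "root_of_unity \<alpha>"
  shows "norm \<alpha> = 1"
proof -
  obtain n :: nat where "n > 0" "\<alpha> ^ n = 1" using assms unfolding root_of_unity_def by blast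
  then have "norm \<alpha> ^ n = 1" by (metis norm_one norm_power)
  with \<open>n > 0\<close> show ?thesis using power_eq_iff_eq_base[of n "norm \<alpha>" 1] by simp
qed

definition pow_minus_two :: "nat \<Rightarrow> int poly" where
  "pow_minus_two d = [:-2:] + Polynomial.monom 1 d"

lemma pow_minus_two_degree:
  assumes "d \<ge> 1"
  shows "degree (pow_minus_two d) = d" "lead_coeff (pow_minus_two d) = 1"
proof -
  have "degree [:-2 :: int:] < degree (Polynomial.monom (1 :: int) d)"
    using assms by (simp add: degree_monom_eq)
  then show "degree (pow_minus_two d) = d" "lead_coeff (pow_minus_two d) = 1"
    unfolding pow_minus_two_def by (simp_all add: degree_add_eq_right lead_coeff_add_le degree_monom_eq coeff_pCons split: nat.split)
qed

lemma poly_pow_minus_two [simp]: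
  "poly (map_poly of_int (pow_minus_two d)) (z :: complex) = z ^ d - 2"
  "poly (map_poly of_rat (map_poly rat_of_int (pow_minus_two d))) z = z ^ d - 2"
  unfolding pow_minus_two_def by (simp_all add: hom_distribs poly_monom map_poly_map_poly o_def)

lemma int_power_neq_two_power:
  assumes "0 < k" "k < d" "(m :: int) \<ge> 0"
  shows "m ^ d \<noteq> 2 ^ k"
proof
  assume eq: "m ^ d = 2 ^ k"
  consider "m \<le> 1" | "m \<ge> 2" by linarith
  then show False
  proof cases
    case 1
    then have "m ^ d \<le> 1" using assms(3) by (simp add: power_le_one)
    moreover have "(2 :: int) ^ k > 1" using assms(1) by simp
    ultimately show False using eq by simp
  next
    case 2
    then have "(2 :: int) ^ d \<le> m ^ d" by (intro power_mono) auto
    moreover have "(2 :: int) ^ k < 2 ^ d" using assms(2) by simp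
    ultimately show False using eq by simp
  qed
qed

lemma irreducible_pow_minus_two:
  assumes d: "d \<ge> 1"
  shows "irreducible (map_poly rat_of_int (pow_minus_two d))" (is "irreducible ?P")
proof (rule irreducibleI)
  have deg_P: "degree ?P = d" using pow_minus_two_degree[OF d] by simp
  show P0: "?P \<noteq> 0" using deg_P d by auto
  then show "\<not> is_unit ?P" using deg_P d by (simp add: is_unit_iff_degree)
  fix a b assume ab: "?P = a * b"
  show "is_unit a \<or> is_unit b"
  proof (rule ccontr)
    assume "\<not> (is_unit a \<or> is_unit b)"
    with ab P0 have "a \<noteq> 0" "degree a > 0" "degree b > 0" by (auto simp: is_unit_iff_degree)
    moreover from this have "degree a < d" using ab deg_P P0 by (auto simp: degree_mult_eq)
    define g where "g = Polynomial.smult (inverse (lead_coeff a)) a"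
    have g: "lead_coeff g = 1" "degree g = degree a" using \<open>a \<noteq> 0\<close> by (auto simp: g_def)
    have Pg: "?P = g * Polynomial.smult (lead_coeff a) b" using \<open>a \<noteq> 0\<close> by (simp add: ab g_def)
    then obtain g' where g': "g = map_poly rat_of_int g'"
      using monic_factor_of_monic_int_poly_is_integral pow_minus_two_degree(2)[OF d] g(1) by blast
    let ?f = "map_poly (of_rat :: rat \<Rightarrow> complex) g"
    have "norm z ^ d = 2" if "poly ?f z = 0" for z
    proof -
      have "poly (map_poly of_rat ?P) z = 0" using that unfolding Pg by (simp add: hom_distribs)
      then have "z ^ d = 2" by simp
      then show ?thesis by (metis norm_numeral norm_power)
    qed
    then have "norm (poly ?f 0) ^ d = 2 ^ degree a"
      using norm_poly_0_power_of_roots[of ?f d 2] g by simp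
    moreover have "poly ?f 0 = of_int (poly.coeff g' 0)" by (simp add: g' poly_0_coeff_0)
    ultimately have "real_of_int (\<bar>poly.coeff g' 0\<bar> ^ d) = real_of_int (2 ^ degree a)" by simp
    then have "\<bar>poly.coeff g' 0\<bar> ^ d = 2 ^ degree a" by (simp only: of_int_eq_iff)
    with int_power_neq_two_power \<open>degree a > 0\<close> \<open>degree a < d\<close> show False by fastforce
  qed
qed

lemma root_two_power:
  assumes "d \<ge> 1"
  shows "complex_of_real (root d 2) ^ d = 2"
proof -
  have "root d 2 ^ d = 2" using assms by (intro real_root_pow_pos2) auto
  then show ?thesis by (metis of_real_numeral of_real_power)
qed

lemma min_poly_root_two:
  assumes "d \<ge> 1"
  shows "min_poly (complex_of_real (root d 2)) = map_poly rat_of_int (pow_minus_two d)"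
  using assms pow_minus_two_degree(2)[OF assms] irreducible_pow_minus_two[OF assms]
  by (intro min_poly_eqI) (simp_all add: root_two_power)

lemma algebraic_integer_root_two:
  assumes "d \<ge> 1"
  shows "algebraic_integer (complex_of_real (root d 2))"
  unfolding algebraic_integer_def
  using pow_minus_two_degree(2)[OF assms] root_two_power[OF assms] by auto

lemma alg_degree_root_two:
  assumes "d \<ge> 1"
  shows "alg_degree (complex_of_real (root d 2)) = d"
  unfolding alg_degree_def min_poly_root_two[OF assms] using pow_minus_two_degree(1)[OF assms] by simp

lemma not_root_of_unity_root_two:
  assumes "d \<ge> 1"
  shows "\<not> root_of_unity (complex_of_real (root d 2))"
  using assms root_of_unity_norm_eq_1 by fastforce

lemma house_root_two:
  assumes "d \<ge> 1"
  shows "house (complex_of_real (root d 2)) = root d 2"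
proof -
  have conj: "conjugates (complex_of_real (root d 2)) = {z. z ^ d = 2}"
    unfolding conjugates_def min_poly_root_two[OF assms] by simp
  have "norm z = root d 2" if "z ^ d = 2" for z :: complex
  proof -
    have "norm z ^ d = 2" using that by (metis norm_numeral norm_power)
    then show ?thesis using assms by (intro real_root_pos_unique[symmetric]) auto
  qed
  moreover have "complex_of_real (root d 2) \<in> conjugates (complex_of_real (root d 2))"
    using conj root_two_power[OF assms] by simp
  ultimately have "norm ` conjugates (complex_of_real (root d 2)) = {root d 2}"
    unfolding conj by (auto simp del: norm_of_real)
  then show ?thesis unfolding house_def by simp
qed

lemma mhouse_bounds:
  assumes d: "d \<ge> 2"
  shows "1 \<le> mhouse d" "mhouse d \<le> root d 2"
proof -
  define S where
    "S = {house \<alpha> | \<alpha>. algebraic_integer \<alpha> \<and> alg_degree \<alpha> = d \<and> \<not> root_of_unity \<alpha>}"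
  have root_in: "root d 2 \<in> S"
    unfolding S_def mem_Collect_eq using d
    by (intro exI[of _ "complex_of_real (root d 2)"])
      (simp add: house_root_two algebraic_integer_root_two alg_degree_root_two
        not_root_of_unity_root_two)
  have lower: "1 \<le> x" if "x \<in> S" for x using that house_ge_1 d unfolding S_def by auto
  then have "bdd_below S" by (rule bdd_belowI)
  show "mhouse d \<le> root d 2"
    unfolding mhouse_def S_def[symmetric] using root_in \<open>bdd_below S\<close> by (rule cInf_lower)
  show "1 \<le> mhouse d"
    unfolding mhouse_def S_def[symmetric] using root_in lower by (blast intro: cInf_greatest)
qed

lemma mhouse_power_bounds:
  assumes "d \<ge> 2"
  shows "mhouse d ^ d \<in> {1..2}"
proof -
  have "mhouse d ^ d \<le> root d 2 ^ d"
    using mhouse_bounds[OF assms] by (intro power_mono) auto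
  also have "\<dots> = 2" using assms by (intro real_root_pow_pos2) auto
  finally show ?thesis using mhouse_bounds(1)[OF assms] by simp
qed

lemma convergent_subseq_in_Icc:
  fixes s :: "nat \<Rightarrow> real"
  assumes "\<And>n. s n \<in> {a..b}"
  obtains r L where "strict_mono r" "L \<in> {a..b}" "(s \<circ> r) \<longlonglongrightarrow> L"
proof -
  obtain r where r: "strict_mono r" "monoseq (s \<circ> r)"
    using seq_monosub[of s] by (auto simp: o_def)
  have "Bseq (s \<circ> r)" using assms by (intro Bseq_eq_bounded[of _ a b]) auto
  then obtain L where L: "(s \<circ> r) \<longlonglongrightarrow> L"
    using Bseq_monoseq_convergent r(2) convergent_def by blast
  have "L \<in> {a..b}"
    using assms by (auto intro: LIMSEQ_le_const[OF L] LIMSEQ_le_const2[OF L])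
  with r(1) L show ?thesis using that by blast
qed

theorem corollary2:
  shows "\<exists>L\<in>{1..2::real}. \<exists>r::nat \<Rightarrow> nat. strict_mono r \<and> r 0 \<ge> 1 \<and>
           (\<lambda>n. mhouse (r n) ^ (r n)) \<longlonglongrightarrow> L"
proof -
  \<comment> \<open>degree 1 is skipped: \<open>0\<close> is an algebraic integer of degree 1 with house 0\<close>
  let ?s = "\<lambda>n. mhouse (n + 2) ^ (n + 2)"
  obtain r L where r: "strict_mono r" and L: "L \<in> {1..2}" "(?s \<circ> r) \<longlonglongrightarrow> L"
    using convergent_subseq_in_Icc[of ?s 1 2] mhouse_power_bounds[of "_ + 2"] by auto
  have "strict_mono (\<lambda>n. r n + 2)" using r by (simp add: strict_mono_def)
  with L show ?thesis by (intro bexI[of _ L] exI[of _ "\<lambda>n. r n + 2"]) (simp_all add: o_def)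
qed

end
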